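(* Every normal distribution constraint is satisfiable.
   Context: A distribution constraint is a pair $C=\bigl((\mu^R)_{\emptyset\ne R\subseteq[n]},([t_j,T_j])_{j=1}^n\bigr)$ with $n\in\mathbb{N}$, $\mu^R\ge0$ for each nonempty $R\subseteq[n]$, and $0\le t_j\le T_j$ for each $j\in[n]$. $C$ is satisfiable if there exist reals $\mu^R_j\ge0$ ($R$ nonempty, $j\in[n]$) with $\mu^R_j=0$ for $j\notin R$, $\sum_j\mu^R_j=\mu^R$ for every $R$, and $\sum_R\mu^R_j\in[t_j,T_j]$ for every $j$. For nonempty $S\subseteq[n]$ set $m_C(S)=\sum_{\emptyset\ne R\subseteq S}\mu^R$, $M_C(S)=\sum_{R:\,R\cap S\ne\emptyset}\mu^R$, $t_C(S)=\sum_{j\in S}t_j$, $T_C(S)=\sum_{j\in S}T_j$. $C$ is normal if $t_C(S)\le M_C(S)$ and $m_C(S)\le T_C(S)$ for every nonempty $S\subseteq[n]$. *)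

theory Defs
  imports Complex_Main
begin

(* A distribution constraint C = ((mu^R)_{R nonempty subset of [n]}, ([t_j,T_j])_{j in [n]})
   is encoded by n :: nat, mu :: nat set => real (only values on nonempty R \<subseteq> {1..n} matter),
   and t, T :: nat => real (only values on {1..n} matter). [n] = {1..n}. *)

definition nonempty_subsets :: "nat \<Rightarrow> nat set set" where
  "nonempty_subsets n = {R. R \<subseteq> {1..n} \<and> R \<noteq> {}}"

definition is_dist_constraint :: "nat \<Rightarrow> (nat set \<Rightarrow> real) \<Rightarrow> (nat \<Rightarrow> real) \<Rightarrow> (nat \<Rightarrow> real) \<Rightarrow> bool" where
  "is_dist_constraint n mu t T \<longleftrightarrow>
     (\<forall>R\<in>nonempty_subsets n. mu R \<ge> 0) \<and> (\<forall>j\<in>{1..n}. 0 \<le> t j \<and> t j \<le> T j)"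

definition satisfiable :: "nat \<Rightarrow> (nat set \<Rightarrow> real) \<Rightarrow> (nat \<Rightarrow> real) \<Rightarrow> (nat \<Rightarrow> real) \<Rightarrow> bool" where
  "satisfiable n mu t T \<longleftrightarrow>
     (\<exists>x :: nat set \<Rightarrow> nat \<Rightarrow> real.
        (\<forall>R\<in>nonempty_subsets n. \<forall>j\<in>{1..n}. x R j \<ge> 0) \<and>
        (\<forall>R\<in>nonempty_subsets n. \<forall>j\<in>{1..n}. j \<notin> R \<longrightarrow> x R j = 0) \<and>
        (\<forall>R\<in>nonempty_subsets n. (\<Sum>j\<in>{1..n}. x R j) = mu R) \<and>
        (\<forall>j\<in>{1..n}. t j \<le> (\<Sum>R\<in>nonempty_subsets n. x R j) \<and>
                     (\<Sum>R\<in>nonempty_subsets n. x R j) \<le> T j))"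

definition m_C :: "nat \<Rightarrow> (nat set \<Rightarrow> real) \<Rightarrow> nat set \<Rightarrow> real" where
  "m_C n mu S = (\<Sum>R\<in>{R\<in>nonempty_subsets n. R \<subseteq> S}. mu R)"

definition M_C :: "nat \<Rightarrow> (nat set \<Rightarrow> real) \<Rightarrow> nat set \<Rightarrow> real" where
  "M_C n mu S = (\<Sum>R\<in>{R\<in>nonempty_subsets n. R \<inter> S \<noteq> {}}. mu R)"

definition t_C :: "(nat \<Rightarrow> real) \<Rightarrow> nat set \<Rightarrow> real" where
  "t_C t S = (\<Sum>j\<in>S. t j)"

definition T_C :: "(nat \<Rightarrow> real) \<Rightarrow> nat set \<Rightarrow> real" where
  "T_C T S = (\<Sum>j\<in>S. T j)"

definition normal :: "nat \<Rightarrow> (nat set \<Rightarrow> real) \<Rightarrow> (nat \<Rightarrow> real) \<Rightarrow> (nat \<Rightarrow> real) \<Rightarrow> bool" where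
  "normal n mu t T \<longleftrightarrow>
     (\<forall>S\<in>nonempty_subsets n. t_C t S \<le> M_C n mu S \<and> m_C n mu S \<le> T_C T S)"

end

theory Submission
  imports Defs
begin

(* Induction on the mass carried by non-singleton sets.  For R with at least two elements and
   j \<in> R, split mu R into l on R - {j} and mu R - l on {j}.  Normality of the new constraint
   amounts to finitely many lower and upper bounds on l, and every lower bound is below every
   upper bound by the crossing inequalities for m_C and M_C (with a gain of mu R for sets
   crossing R).  A solution of the split constraint yields one of the original by moving back
   to R a proportional share of the flows of R - {j} and {j}.  When all mass sits on
   singletons, normality at the singletons is already feasibility. *)

lemma finite_nonempty_subsets: "finite (nonempty_subsets n)"
  by (rule finite_subset[of _ "Pow {1..n}"]) (auto simp: nonempty_subsets_def)

lemma finite_if_nonempty_subset: "Q \<in> nonempty_subsets n \<Longrightarrow> finite Q"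
  by (auto simp: nonempty_subsets_def intro: finite_subset)

lemma m_C_as_sum: "m_C n mu S = (\<Sum>Q\<in>nonempty_subsets n. if Q \<subseteq> S then mu Q else 0)"
  unfolding m_C_def by (rule sum.inter_filter[OF finite_nonempty_subsets])

lemma M_C_as_sum: "M_C n mu S = (\<Sum>Q\<in>nonempty_subsets n. if Q \<inter> S \<noteq> {} then mu Q else 0)"
  unfolding M_C_def by (rule sum.inter_filter[OF finite_nonempty_subsets])

definition move_mass :: "('a \<Rightarrow> real) \<Rightarrow> 'a \<Rightarrow> 'a \<Rightarrow> real \<Rightarrow> 'a \<Rightarrow> real" where
  "move_mass f P Q a = (\<lambda>Z. f Z - (if Z = P then a else 0) + (if Z = Q then a else 0))"

lemma sum_move_mass:
  "finite F \<Longrightarrow>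
    sum (move_mass f P Q a) F = sum f F - (if P \<in> F then a else 0) + (if Q \<in> F then a else 0)"
  by (simp add: move_mass_def sum.distrib sum_subtractf)

lemma m_C_move_mass:
  "m_C n (move_mass mu P Q a) S = m_C n mu S
     - (if P \<in> nonempty_subsets n \<and> P \<subseteq> S then a else 0)
     + (if Q \<in> nonempty_subsets n \<and> Q \<subseteq> S then a else 0)"
  unfolding m_C_def by (simp add: sum_move_mass finite_nonempty_subsets)

lemma M_C_move_mass:
  "M_C n (move_mass mu P Q a) S = M_C n mu S
     - (if P \<in> nonempty_subsets n \<and> P \<inter> S \<noteq> {} then a else 0)
     + (if Q \<in> nonempty_subsets n \<and> Q \<inter> S \<noteq> {} then a else 0)"
  unfolding M_C_def by (simp add: sum_move_mass finite_nonempty_subsets)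

lemma sum_mono_with_gap:
  fixes g h :: "'a \<Rightarrow> real"
  assumes "finite F" "R \<in> F" "\<And>Q. Q \<in> F \<Longrightarrow> g Q \<le> h Q" "g R + c \<le> h R"
  shows "sum g F + c \<le> sum h F"
proof -
  have "sum g (F - {R}) \<le> sum h (F - {R})" using assms(3) by (intro sum_mono) auto
  then show ?thesis
    using assms(4) sum.remove[OF assms(1,2), of g] sum.remove[OF assms(1,2), of h] by linarith
qed

lemma m_C_crossing:
  assumes nonneg: "\<And>Q. Q \<in> nonempty_subsets n \<Longrightarrow> 0 \<le> mu Q" and R: "R \<in> nonempty_subsets n"
    and "R \<subseteq> A \<union> B" "\<not> R \<subseteq> A" "\<not> R \<subseteq> B"
  shows "m_C n mu A + m_C n mu B + mu R \<le> m_C n mu (A \<union> B) + m_C n mu (A \<inter> B)"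
  unfolding m_C_as_sum sum.distrib[symmetric]
proof (rule sum_mono_with_gap[OF finite_nonempty_subsets R])
  fix Q assume "Q \<in> nonempty_subsets n"
  then show "(if Q \<subseteq> A then mu Q else 0) + (if Q \<subseteq> B then mu Q else 0)
      \<le> (if Q \<subseteq> A \<union> B then mu Q else 0) + (if Q \<subseteq> A \<inter> B then mu Q else 0)"
    using nonneg[of Q] by (cases "Q \<subseteq> A"; cases "Q \<subseteq> B") auto
qed (use assms in auto)

lemma M_C_crossing:
  assumes nonneg: "\<And>Q. Q \<in> nonempty_subsets n \<Longrightarrow> 0 \<le> mu Q" and R: "R \<in> nonempty_subsets n"
    and "R \<inter> A \<noteq> {}" "R \<inter> B \<noteq> {}" "R \<inter> A \<inter> B = {}"
  shows "M_C n mu (A \<union> B) + M_C n mu (A \<inter> B) + mu R \<le> M_C n mu A + M_C n mu B"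
  unfolding M_C_as_sum sum.distrib[symmetric]
proof (rule sum_mono_with_gap[OF finite_nonempty_subsets R])
  fix Q assume "Q \<in> nonempty_subsets n"
  then show "(if Q \<inter> (A \<union> B) \<noteq> {} then mu Q else 0) + (if Q \<inter> (A \<inter> B) \<noteq> {} then mu Q else 0)
      \<le> (if Q \<inter> A \<noteq> {} then mu Q else 0) + (if Q \<inter> B \<noteq> {} then mu Q else 0)"
    using nonneg[of Q] by (cases "Q \<inter> A = {}"; cases "Q \<inter> B = {}") auto
qed (use assms in auto)

lemma M_C_m_C_crossing:
  assumes nonneg: "\<And>Q. Q \<in> nonempty_subsets n \<Longrightarrow> 0 \<le> mu Q" and R: "R \<in> nonempty_subsets n"
    and "R \<inter> A \<noteq> {}" "\<not> R \<subseteq> B" "R \<inter> (A - B) = {}"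
  shows "M_C n mu (A - B) + m_C n mu B + mu R \<le> M_C n mu A + m_C n mu (B - A)"
  unfolding m_C_as_sum M_C_as_sum sum.distrib[symmetric]
proof (rule sum_mono_with_gap[OF finite_nonempty_subsets R])
  fix Q assume Q: "Q \<in> nonempty_subsets n"
  then have "Q \<noteq> {}" by (simp add: nonempty_subsets_def)
  then show "(if Q \<inter> (A - B) \<noteq> {} then mu Q else 0) + (if Q \<subseteq> B then mu Q else 0)
      \<le> (if Q \<inter> A \<noteq> {} then mu Q else 0) + (if Q \<subseteq> B - A then mu Q else 0)"
    using nonneg[OF Q]
    by (cases "Q \<inter> A = {}"; cases "Q \<subseteq> B"; cases "Q \<inter> (A - B) = {}") auto
qed (use assms in auto)

lemma normal_on_subsets:
  assumes "normal n mu t T" "S \<subseteq> {1..n}"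
  shows "t_C t S \<le> M_C n mu S" "m_C n mu S \<le> T_C T S"
  using assms by (cases "S = {}";
      auto simp: normal_def m_C_def M_C_def t_C_def T_C_def nonempty_subsets_def)+

lemma normal_m_C_crossing:
  assumes "\<And>Q. Q \<in> nonempty_subsets n \<Longrightarrow> 0 \<le> mu Q" "normal n mu t T"
    and "A \<subseteq> {1..n}" "B \<subseteq> {1..n}" "R \<in> nonempty_subsets n"
    and "R \<subseteq> A \<union> B" "\<not> R \<subseteq> A" "\<not> R \<subseteq> B"
  shows "m_C n mu A + m_C n mu B + mu R \<le> T_C T A + T_C T B"
proof -
  have "T_C T (A \<union> B) + T_C T (A \<inter> B) = T_C T A + T_C T B"
    unfolding T_C_def using assms(3,4) by (intro sum.union_inter) (auto intro: finite_subset)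
  moreover have "m_C n mu (A \<union> B) \<le> T_C T (A \<union> B)" "m_C n mu (A \<inter> B) \<le> T_C T (A \<inter> B)"
    by (rule normal_on_subsets(2)[OF assms(2)], use assms(3,4) in blast)+
  ultimately show ?thesis using m_C_crossing[of n mu, OF assms(1,5-8)] by linarith
qed

lemma normal_M_C_crossing:
  assumes "\<And>Q. Q \<in> nonempty_subsets n \<Longrightarrow> 0 \<le> mu Q" "normal n mu t T"
    and "A \<subseteq> {1..n}" "B \<subseteq> {1..n}" "R \<in> nonempty_subsets n"
    and "R \<inter> A \<noteq> {}" "R \<inter> B \<noteq> {}" "R \<inter> A \<inter> B = {}"
  shows "t_C t A + t_C t B + mu R \<le> M_C n mu A + M_C n mu B"
proof -
  have "t_C t (A \<union> B) + t_C t (A \<inter> B) = t_C t A + t_C t B"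
    unfolding t_C_def using assms(3,4) by (intro sum.union_inter) (auto intro: finite_subset)
  moreover have "t_C t (A \<union> B) \<le> M_C n mu (A \<union> B)" "t_C t (A \<inter> B) \<le> M_C n mu (A \<inter> B)"
    by (rule normal_on_subsets(1)[OF assms(2)], use assms(3,4) in blast)+
  ultimately show ?thesis using M_C_crossing[of n mu, OF assms(1,5-8)] by linarith
qed

lemma normal_M_C_m_C_crossing:
  assumes "\<And>Q. Q \<in> nonempty_subsets n \<Longrightarrow> 0 \<le> mu Q" "normal n mu t T"
    and "\<And>i. i \<in> {1..n} \<Longrightarrow> t i \<le> T i"
    and "A \<subseteq> {1..n}" "B \<subseteq> {1..n}" "R \<in> nonempty_subsets n"
    and "R \<inter> A \<noteq> {}" "\<not> R \<subseteq> B" "R \<inter> (A - B) = {}"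
  shows "t_C t A + m_C n mu B + mu R \<le> M_C n mu A + T_C T B"
proof -
  have fin: "finite A" "finite B" using assms(4,5) by (auto intro: finite_subset)
  have "t_C t A = t_C t (A \<inter> B) + t_C t (A - B)"
    unfolding t_C_def using fin by (intro sum.Int_Diff)
  moreover have "T_C T B = T_C T (A \<inter> B) + T_C T (B - A)"
    unfolding T_C_def using sum.Int_Diff[OF fin(2), of T A] by (simp add: Int_commute)
  moreover have "t_C t (A \<inter> B) \<le> T_C T (A \<inter> B)"
    unfolding t_C_def T_C_def using assms(3,4) by (intro sum_mono) auto
  moreover have "t_C t (A - B) \<le> M_C n mu (A - B)" "m_C n mu (B - A) \<le> T_C T (B - A)"
    by (rule normal_on_subsets[OF assms(2)], use assms(4,5) in blast)+
  ultimately show ?thesis using M_C_m_C_crossing[of n mu, OF assms(1,6-9)] by linarith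
qed

definition split_mass :: "(nat set \<Rightarrow> real) \<Rightarrow> nat set \<Rightarrow> nat \<Rightarrow> real \<Rightarrow> nat set \<Rightarrow> real" where
  "split_mass mu R j l = move_mass (move_mass mu R (R - {j}) l) R {j} (mu R - l)"

lemma split_mass_parts_nonempty:
  assumes "R \<in> nonempty_subsets n" "j \<in> R" "R - {j} \<noteq> {}"
  shows "R - {j} \<in> nonempty_subsets n" "{j} \<in> nonempty_subsets n"
  using assms by (auto simp: nonempty_subsets_def)

lemma split_mass_at:
  assumes "j \<in> R" "R - {j} \<noteq> {}"
  shows "split_mass mu R j l R = 0" "split_mass mu R j l (R - {j}) = mu (R - {j}) + l"
    "split_mass mu R j l {j} = mu {j} + (mu R - l)"
    "P \<notin> {R, R - {j}, {j}} \<Longrightarrow> split_mass mu R j l P = mu P"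
  using assms by (auto simp: split_mass_def move_mass_def)

lemma m_C_split_mass:
  assumes "R \<in> nonempty_subsets n" "j \<in> R" "R - {j} \<noteq> {}"
  shows "m_C n (split_mass mu R j l) S = m_C n mu S - (if R \<subseteq> S then mu R else 0)
    + (if R - {j} \<subseteq> S then l else 0) + (if j \<in> S then mu R - l else 0)"
  using assms split_mass_parts_nonempty[OF assms] by (simp add: split_mass_def m_C_move_mass)

lemma M_C_split_mass:
  assumes "R \<in> nonempty_subsets n" "j \<in> R" "R - {j} \<noteq> {}"
  shows "M_C n (split_mass mu R j l) S = M_C n mu S - (if R \<inter> S \<noteq> {} then mu R else 0)
    + (if (R - {j}) \<inter> S \<noteq> {} then l else 0) + (if j \<in> S then mu R - l else 0)"
  using assms split_mass_parts_nonempty[OF assms] by (simp add: split_mass_def M_C_move_mass)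

lemma normal_split_mass:
  assumes normal: "normal n mu t T"
    and R: "R \<in> nonempty_subsets n" "j \<in> R" "R - {j} \<noteq> {}"
    and "\<And>S. S \<in> nonempty_subsets n \<Longrightarrow> j \<in> S \<Longrightarrow> \<not> R - {j} \<subseteq> S \<Longrightarrow>
      m_C n mu S + mu R - T_C T S \<le> l"
    and "\<And>S. S \<in> nonempty_subsets n \<Longrightarrow> j \<notin> S \<Longrightarrow> (R - {j}) \<inter> S \<noteq> {} \<Longrightarrow>
      mu R - M_C n mu S + t_C t S \<le> l"
    and "\<And>S. S \<in> nonempty_subsets n \<Longrightarrow> j \<notin> S \<Longrightarrow> R - {j} \<subseteq> S \<Longrightarrow>
      l \<le> T_C T S - m_C n mu S"
    and "\<And>S. S \<in> nonempty_subsets n \<Longrightarrow> j \<in> S \<Longrightarrow> (R - {j}) \<inter> S = {} \<Longrightarrow>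
      l \<le> M_C n mu S - t_C t S"
  shows "normal n (split_mass mu R j l) t T"
  unfolding normal_def
proof
  fix S assume S: "S \<in> nonempty_subsets n"
  have "R \<subseteq> S \<longleftrightarrow> j \<in> S \<and> R - {j} \<subseteq> S"
    "R \<inter> S \<noteq> {} \<longleftrightarrow> j \<in> S \<or> (R - {j}) \<inter> S \<noteq> {}"
    using R(2) by blast+
  moreover have "t_C t S \<le> M_C n mu S" "m_C n mu S \<le> T_C T S"
    using normal S by (auto simp: normal_def)
  ultimately show
    "t_C t S \<le> M_C n (split_mass mu R j l) S \<and> m_C n (split_mass mu R j l) S \<le> T_C T S"
    unfolding m_C_split_mass[OF R] M_C_split_mass[OF R] using assms(5-8)[OF S] R(3)
    by (cases "j \<in> S"; cases "R - {j} \<subseteq> S"; cases "(R - {j}) \<inter> S = {}") auto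
qed

lemma obtain_separating_value:
  fixes L U :: "'a::linorder set"
  assumes "finite L" "L \<noteq> {}" "\<And>a b. a \<in> L \<Longrightarrow> b \<in> U \<Longrightarrow> a \<le> b"
  obtains c where "\<And>a. a \<in> L \<Longrightarrow> a \<le> c" "\<And>b. b \<in> U \<Longrightarrow> c \<le> b"
  using assms by (intro that[of "Max L"]) auto

lemma exists_normal_split_mass:
  assumes dist: "is_dist_constraint n mu t T" and normal: "normal n mu t T"
    and R: "R \<in> nonempty_subsets n" "j \<in> R" "R - {j} \<noteq> {}"
  obtains l where "0 \<le> l" "l \<le> mu R" "normal n (split_mass mu R j l) t T"
proof -
  have nonneg: "\<And>Q. Q \<in> nonempty_subsets n \<Longrightarrow> 0 \<le> mu Q"
    and tT: "\<And>i. i \<in> {1..n} \<Longrightarrow> t i \<le> T i"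
    using dist by (auto simp: is_dist_constraint_def)
  have sub: "\<And>S. S \<in> nonempty_subsets n \<Longrightarrow> S \<subseteq> {1..n}"
    by (simp add: nonempty_subsets_def)
  have tM: "\<And>S. S \<in> nonempty_subsets n \<Longrightarrow> t_C t S \<le> M_C n mu S"
    and mT: "\<And>S. S \<in> nonempty_subsets n \<Longrightarrow> m_C n mu S \<le> T_C T S"
    using normal by (auto simp: normal_def)
  define R' where "R' = R - {j}"
  have R_eq: "R = insert j R'" using R(2) by (auto simp: R'_def)
  \<comment> \<open>the lower and upper bounds on l required by normal_split_mass, together with 0 and mu R\<close>
  define L where "L = insert 0
    ((\<lambda>S. m_C n mu S + mu R - T_C T S) ` {S \<in> nonempty_subsets n. j \<in> S \<and> \<not> R' \<subseteq> S}
     \<union> (\<lambda>S. mu R - M_C n mu S + t_C t S) ` {S \<in> nonempty_subsets n. j \<notin> S \<and> R' \<inter> S \<noteq> {}})"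
  define U where "U = insert (mu R)
    ((\<lambda>S. T_C T S - m_C n mu S) ` {S \<in> nonempty_subsets n. j \<notin> S \<and> R' \<subseteq> S}
     \<union> (\<lambda>S. M_C n mu S - t_C t S) ` {S \<in> nonempty_subsets n. j \<in> S \<and> R' \<inter> S = {}})"
  have "finite L"
    unfolding L_def using finite_nonempty_subsets by auto
  moreover have "a \<le> b" if "a \<in> L" "b \<in> U" for a b
  proof -
    have "m_C n mu S1 + m_C n mu S2 + mu R \<le> T_C T S1 + T_C T S2"
      if "S1 \<in> nonempty_subsets n" "j \<in> S1" "\<not> R' \<subseteq> S1"
        "S2 \<in> nonempty_subsets n" "j \<notin> S2" "R' \<subseteq> S2" for S1 S2
      by (rule normal_m_C_crossing[of n mu, OF nonneg normal sub sub R(1)]) (use that R_eq in auto)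
    moreover have "t_C t S2 + m_C n mu S1 + mu R \<le> M_C n mu S2 + T_C T S1"
      if "S1 \<in> nonempty_subsets n" "j \<in> S1" "\<not> R' \<subseteq> S1"
        "S2 \<in> nonempty_subsets n" "j \<in> S2" "R' \<inter> S2 = {}" for S1 S2
      by (rule normal_M_C_m_C_crossing[of n mu, OF nonneg normal tT sub sub R(1)])
        (use that R_eq in auto)
    moreover have "t_C t S1 + m_C n mu S2 + mu R \<le> M_C n mu S1 + T_C T S2"
      if "S1 \<in> nonempty_subsets n" "j \<notin> S1" "R' \<inter> S1 \<noteq> {}"
        "S2 \<in> nonempty_subsets n" "j \<notin> S2" "R' \<subseteq> S2" for S1 S2
      by (rule normal_M_C_m_C_crossing[of n mu, OF nonneg normal tT sub sub R(1)])
        (use that R_eq in auto)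
    moreover have "t_C t S1 + t_C t S2 + mu R \<le> M_C n mu S1 + M_C n mu S2"
      if "S1 \<in> nonempty_subsets n" "j \<notin> S1" "R' \<inter> S1 \<noteq> {}"
        "S2 \<in> nonempty_subsets n" "j \<in> S2" "R' \<inter> S2 = {}" for S1 S2
      by (rule normal_M_C_crossing[of n mu, OF nonneg normal sub sub R(1)]) (use that R_eq in auto)
    ultimately show ?thesis
      using that nonneg[OF R(1)] tM mT unfolding L_def U_def by (fastforce simp: algebra_simps)
  qed
  ultimately obtain l where l: "\<And>a. a \<in> L \<Longrightarrow> a \<le> l" "\<And>b. b \<in> U \<Longrightarrow> l \<le> b"
    using obtain_separating_value[of L U] unfolding L_def by blast
  show ?thesis
  proof (rule that)
    show "0 \<le> l" "l \<le> mu R" using l by (auto simp: L_def U_def)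
    show "normal n (split_mass mu R j l) t T"
      by (rule normal_split_mass[OF normal R]) (use l in \<open>auto simp: L_def U_def R'_def\<close>)
  qed
qed

lemma satisfiable_of_move_mass:
  assumes R: "R \<in> nonempty_subsets n" and Q: "Q \<in> nonempty_subsets n" "Q \<subset> R"
    and a: "0 \<le> a" and muQ: "0 \<le> mu Q"
    and sat: "satisfiable n (move_mass mu R Q a) t T"
  shows "satisfiable n mu t T"
proof -
  obtain y where y_nonneg: "\<forall>P\<in>nonempty_subsets n. \<forall>i\<in>{1..n}. y P i \<ge> 0"
    and y_support: "\<forall>P\<in>nonempty_subsets n. \<forall>i\<in>{1..n}. i \<notin> P \<longrightarrow> y P i = 0"
    and y_rows: "\<forall>P\<in>nonempty_subsets n. (\<Sum>i\<in>{1..n}. y P i) = move_mass mu R Q a P"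
    and y_cols: "\<forall>i\<in>{1..n}.
      t i \<le> (\<Sum>P\<in>nonempty_subsets n. y P i) \<and> (\<Sum>P\<in>nonempty_subsets n. y P i) \<le> T i"
    using sat unfolding satisfiable_def by blast
  have QR: "Q \<noteq> R" using Q(2) by blast
  \<comment> \<open>the share of row Q that came from R; if mu Q + a = 0 then a = 0, so c = 0 is harmless\<close>
  define c where "c = a / (mu Q + a)"
  have c: "0 \<le> c" "c \<le> 1" "c * (mu Q + a) = a"
    using a muQ by (auto simp: c_def divide_le_eq_1)
  define x where "x = (\<lambda>P i. move_mass (\<lambda>P. y P i) Q R (c * y Q i) P)"
  have x_R: "x R i = y R i + c * y Q i" and x_Q: "x Q i = (1 - c) * y Q i"
    and x_other: "P \<noteq> R \<Longrightarrow> P \<noteq> Q \<Longrightarrow> x P i = y P i" for P i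
    using QR by (auto simp: x_def move_mass_def algebra_simps)
  have "x P i \<ge> 0" if "P \<in> nonempty_subsets n" "i \<in> {1..n}" for P i
    using y_nonneg R Q that c(1,2)
    by (cases "P = R"; cases "P = Q") (auto simp: x_R x_Q x_other)
  moreover have "\<forall>P\<in>nonempty_subsets n. \<forall>i\<in>{1..n}. i \<notin> P \<longrightarrow> x P i = 0"
    using y_support R Q by (auto simp: x_def move_mass_def)
  moreover have "(\<Sum>i\<in>{1..n}. x P i) = mu P" if P: "P \<in> nonempty_subsets n" for P
  proof -
    have row_R: "(\<Sum>i\<in>{1..n}. y R i) = mu R - a"
      and row_Q: "(\<Sum>i\<in>{1..n}. y Q i) = mu Q + a"
      using y_rows R Q QR by (auto simp: move_mass_def)
    consider "P = R" | "P = Q" | "P \<noteq> R" "P \<noteq> Q" by blast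
    then show ?thesis
    proof cases
      case 1
      then show ?thesis
        using row_R row_Q c(3) by (simp add: x_R sum.distrib sum_distrib_left[symmetric])
    next
      case 2
      have "(\<Sum>i\<in>{1..n}. x Q i) = (1 - c) * (mu Q + a)"
        by (simp only: x_Q sum_distrib_left[symmetric] row_Q)
      then show ?thesis using 2 c(3) by (simp add: algebra_simps)
    next
      case 3
      then show ?thesis using y_rows P by (simp add: x_other move_mass_def)
    qed
  qed
  moreover have "(\<Sum>P\<in>nonempty_subsets n. x P i) = (\<Sum>P\<in>nonempty_subsets n. y P i)" for i
    using R Q by (simp add: x_def sum_move_mass finite_nonempty_subsets)
  ultimately show ?thesis
    unfolding satisfiable_def using y_cols by (intro exI[of _ x]) auto
qed

lemma is_dist_constraint_split_mass:
  assumes "is_dist_constraint n mu t T" "R \<in> nonempty_subsets n" "j \<in> R" "R - {j} \<noteq> {}"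
    and "0 \<le> l" "l \<le> mu R"
  shows "is_dist_constraint n (split_mass mu R j l) t T"
proof -
  have "0 \<le> mu (R - {j})" "0 \<le> mu {j}"
    using assms(1) split_mass_parts_nonempty[OF assms(2-4)]
    by (auto simp: is_dist_constraint_def)
  moreover have "0 \<le> mu P" if "P \<in> nonempty_subsets n" for P
    using assms(1) that by (auto simp: is_dist_constraint_def)
  ultimately have "0 \<le> split_mass mu R j l P" if "P \<in> nonempty_subsets n" for P
    using that assms(5,6) split_mass_at[OF assms(3,4)]
    by (cases "P = R"; cases "P = R - {j}"; cases "P = {j}") auto
  then show ?thesis
    using assms(1) by (auto simp: is_dist_constraint_def)
qed

lemma satisfiable_of_split_mass:
  assumes "is_dist_constraint n mu t T"
    and R: "R \<in> nonempty_subsets n" "j \<in> R" "R - {j} \<noteq> {}"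
    and l: "0 \<le> l" "l \<le> mu R" and sat: "satisfiable n (split_mass mu R j l) t T"
  shows "satisfiable n mu t T"
proof -
  note parts = split_mass_parts_nonempty[OF R]
  have nonneg: "0 \<le> mu (R - {j})" "0 \<le> mu {j}"
    using assms(1) parts by (auto simp: is_dist_constraint_def)
  have "satisfiable n (move_mass mu R (R - {j}) l) t T"
  proof (rule satisfiable_of_move_mass[OF R(1) parts(2)])
    show "{j} \<subset> R" "0 \<le> mu R - l" using R(2,3) l(2) by auto
    show "0 \<le> move_mass mu R (R - {j}) l {j}"
      using R(2,3) nonneg(2) by (auto simp: move_mass_def)
    show "satisfiable n (move_mass (move_mass mu R (R - {j}) l) R {j} (mu R - l)) t T"
      using sat by (simp only: split_mass_def)
  qed
  moreover have "R - {j} \<subset> R" using R(2) by blast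
  ultimately show ?thesis
    using satisfiable_of_move_mass[OF R(1) parts(1)] l(1) nonneg(1) by blast
qed

definition support_excess :: "nat \<Rightarrow> (nat set \<Rightarrow> real) \<Rightarrow> nat" where
  "support_excess n mu = (\<Sum>Q\<in>nonempty_subsets n. if mu Q = 0 then 0 else card Q - 1)"

lemma support_excess_split_mass_less:
  assumes R: "R \<in> nonempty_subsets n" "j \<in> R" "R - {j} \<noteq> {}" and "mu R \<noteq> 0"
  shows "support_excess n (split_mass mu R j l) < support_excess n mu"
proof -
  define g where "g = (\<lambda>(mu :: nat set \<Rightarrow> real) Q. if mu Q = 0 then 0 else card Q - (1::nat))"
  define F where "F = nonempty_subsets n - {R} - {R - {j}}"
  have R': "R - {j} \<in> nonempty_subsets n - {R}"
    using split_mass_parts_nonempty[OF R] R(2) by auto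
  have split_sum: "support_excess n m = g m R + g m (R - {j}) + sum (g m) F" for m
  proof -
    have "support_excess n m = g m R + sum (g m) (nonempty_subsets n - {R})"
      unfolding support_excess_def g_def by (rule sum.remove[OF finite_nonempty_subsets R(1)])
    also have "sum (g m) (nonempty_subsets n - {R}) = g m (R - {j}) + sum (g m) F"
      unfolding F_def by (rule sum.remove[OF _ R']) (simp add: finite_nonempty_subsets)
    finally show ?thesis by simp
  qed
  have "g (split_mass mu R j l) Q = g mu Q" if "Q \<in> F" for Q
  proof (cases "Q = {j}")
    case False
    then show ?thesis using that split_mass_at(4)[OF R(2,3)] by (simp add: F_def g_def)
  qed (simp add: g_def)
  then have "sum (g (split_mass mu R j l)) F = sum (g mu) F"
    by (rule sum.cong[OF refl])
  moreover have "g (split_mass mu R j l) R = 0"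
    unfolding g_def using split_mass_at(1)[OF R(2,3)] by simp
  moreover have "g (split_mass mu R j l) (R - {j}) \<le> card (R - {j}) - 1" "g mu R = card R - 1"
    unfolding g_def using assms(4) by auto
  moreover have "card (R - {j}) = card R - 1" "card (R - {j}) > 0"
    using R(2,3) finite_if_nonempty_subset[OF R(1)] by (simp, subst card_gt_0_iff, simp)
  ultimately show ?thesis
    unfolding split_sum by linarith
qed

lemma m_C_singleton:
  assumes "i \<in> {1..n}"
  shows "m_C n mu {i} = mu {i}"
proof -
  have "{R \<in> nonempty_subsets n. R \<subseteq> {i}} = {{i}}"
    using assms by (auto simp: nonempty_subsets_def)
  then show ?thesis by (simp add: m_C_def)
qed

lemma M_C_singleton:
  assumes "i \<in> {1..n}"
    and "\<And>Q. Q \<in> nonempty_subsets n \<Longrightarrow> i \<in> Q \<Longrightarrow> Q \<noteq> {i} \<Longrightarrow> mu Q = 0"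
  shows "M_C n mu {i} = mu {i}"
proof -
  have "M_C n mu {i} = (\<Sum>Q\<in>nonempty_subsets n. if Q = {i} then mu Q else 0)"
    unfolding M_C_as_sum using assms(2) by (intro sum.cong) auto
  also have "\<dots> = mu {i}"
    using assms(1) by (simp add: finite_nonempty_subsets nonempty_subsets_def)
  finally show ?thesis .
qed

lemma satisfiable_if_singleton_support:
  assumes dist: "is_dist_constraint n mu t T" and normal: "normal n mu t T"
    and singleton: "\<And>Q. Q \<in> nonempty_subsets n \<Longrightarrow> mu Q \<noteq> 0 \<Longrightarrow> \<exists>i. Q = {i}"
  shows "satisfiable n mu t T"
  unfolding satisfiable_def
proof (intro exI[of _ "\<lambda>Q i. if Q = {i} then mu Q else 0"] conjI ballI impI)
  fix Q assume Q: "Q \<in> nonempty_subsets n"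
  show "(\<Sum>i\<in>{1..n}. if Q = {i} then mu Q else 0) = mu Q"
  proof (cases "mu Q = 0")
    case False
    then obtain k where "Q = {k}" using singleton Q by blast
    then show ?thesis using Q by (simp add: nonempty_subsets_def)
  next
    case True
    then show ?thesis by (auto intro: sum.neutral)
  qed
  fix i
  show "0 \<le> (if Q = {i} then mu Q else 0)"
    using dist Q by (auto simp: is_dist_constraint_def)
next
  fix i assume i: "i \<in> {1..n}"
  have "(\<Sum>Q\<in>nonempty_subsets n. if Q = {i} then mu Q else 0) = mu {i}"
    using i by (simp add: finite_nonempty_subsets nonempty_subsets_def)
  moreover have "t_C t {i} \<le> M_C n mu {i}" "m_C n mu {i} \<le> T_C T {i}"
    using normal_on_subsets[OF normal] i by auto
  moreover have "M_C n mu {i} = mu {i}"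
    by (rule M_C_singleton[OF i]) (use singleton in fastforce)
  ultimately show "t i \<le> (\<Sum>Q\<in>nonempty_subsets n. if Q = {i} then mu Q else 0)"
    "(\<Sum>Q\<in>nonempty_subsets n. if Q = {i} then mu Q else 0) \<le> T i"
    using m_C_singleton[OF i] by (auto simp: t_C_def T_C_def)
qed auto

theorem mainTheorem16:
  fixes n :: nat and mu :: "nat set \<Rightarrow> real" and t T :: "nat \<Rightarrow> real"
  assumes "is_dist_constraint n mu t T"
    and "normal n mu t T"
  shows "satisfiable n mu t T"
  using assms
proof (induction mu rule: measure_induct_rule[where f = "support_excess n"])
  case (less mu)
  show ?case
  proof (cases "\<forall>Q\<in>nonempty_subsets n. mu Q \<noteq> 0 \<longrightarrow> (\<exists>i. Q = {i})")
    case True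
    then show ?thesis using satisfiable_if_singleton_support less.prems by blast
  next
    case False
    then obtain R where R: "R \<in> nonempty_subsets n" "mu R \<noteq> 0" "\<nexists>i. R = {i}" by blast
    obtain j where "j \<in> R" using R(1) by (auto simp: nonempty_subsets_def)
    with R(3) have j: "j \<in> R" "R - {j} \<noteq> {}" by blast+
    obtain l where l: "0 \<le> l" "l \<le> mu R" "normal n (split_mass mu R j l) t T"
      using exists_normal_split_mass[OF less.prems R(1) j] .
    have "satisfiable n (split_mass mu R j l) t T"
      using less.IH support_excess_split_mass_less[of R n j mu l, OF R(1) j R(2)] l(3)
        is_dist_constraint_split_mass[OF less.prems(1) R(1) j l(1,2)] by blast
    then show ?thesis
      by (rule satisfiable_of_split_mass[OF less.prems(1) R(1) j l(1,2)])
  qed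
qed

end
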